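(* Let $\mathbf a:\mathbb{R}^d\to\mathbb{R}^n$ be differentiable, let $z_1,\dots,z_n$ be independent real noises with common differentiable cdf $F$, and let $x_i=\mathrm{sign}(a_i(\boldsymbol\phi)-z_i)\in\{-1,1\}$, so that $P(x_i=1)=F(a_i(\boldsymbol\phi))$ independently. Let $\mathcal L:\mathbb{R}^n\to\mathbb{R}$ be multilinear, i.e., affine in each coordinate $x_i$ when the other coordinates are fixed. Define the straight-through estimator $$\hat{\mathbf g}(\mathbf x)=\sum_{i=1}^n 2F'(a_i(\boldsymbol\phi))\,\nabla_{\boldsymbol\phi}a_i(\boldsymbol\phi)\,\frac{\partial\mathcal L(\mathbf x)}{\partial x_i}.$$ Then $\hat{\mathbf g}$ is unbiased: $\mathbb{E}_{\mathbf x}[\hat{\mathbf g}(\mathbf x)]=\nabla_{\boldsymbol\phi}\mathbb{E}_{\mathbf x}[\mathcal L(\mathbf x)]$. *)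

theory Defs
  imports "HOL-Analysis.Analysis" "HOL-Probability.Probability"
begin

definition is_cdf :: "(real \<Rightarrow> real) \<Rightarrow> bool" where
  "is_cdf F \<longleftrightarrow> mono F \<and> (\<forall>t. continuous (at_right t) F)
     \<and> (F \<longlongrightarrow> 0) at_bot \<and> (F \<longlongrightarrow> 1) at_top"

definition sign_pmf :: "real \<Rightarrow> real pmf" where
  "sign_pmf p = map_pmf (\<lambda>b. if b then 1 else -1) (bernoulli_pmf p)"

definition ste_dist :: "(real \<Rightarrow> real) \<Rightarrow> ('d \<Rightarrow> 'n::finite \<Rightarrow> real) \<Rightarrow> 'd \<Rightarrow> ('n \<Rightarrow> real) pmf" where
  "ste_dist F a \<phi> = Pi_pmf UNIV 0 (\<lambda>i. sign_pmf (F (a \<phi> i)))"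

definition multilinear :: "(('n \<Rightarrow> real) \<Rightarrow> real) \<Rightarrow> bool" where
  "multilinear L \<longleftrightarrow> (\<forall>x i. \<exists>c b. \<forall>t. L (x(i := t)) = c * t + b)"

definition partial :: "(('n \<Rightarrow> real) \<Rightarrow> real) \<Rightarrow> 'n \<Rightarrow> ('n \<Rightarrow> real) \<Rightarrow> real" where
  "partial L i x = deriv (\<lambda>t. L (x(i := t))) (x i)"

definition ste :: "(real \<Rightarrow> real) \<Rightarrow> ('d \<Rightarrow> 'n::finite \<Rightarrow> real) \<Rightarrow> ('d \<Rightarrow> 'n \<Rightarrow> 'd)
     \<Rightarrow> (('n \<Rightarrow> real) \<Rightarrow> real) \<Rightarrow> 'd \<Rightarrow> ('n \<Rightarrow> real) \<Rightarrow> 'd::real_vector" where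
  "ste F a ga L \<phi> x = (\<Sum>i\<in>UNIV. (2 * deriv F (a \<phi> i) * partial L i x) *\<^sub>R ga \<phi> i)"

end

theory Submission
  imports Defs
begin

text \<open>
  The sign vector takes finitely many values, so the expected loss is the finite sum
  \<open>\<Sum>\<^sub>x \<Prod>\<^sub>i q(p\<^sub>i, x\<^sub>i) L(x)\<close> with \<open>p\<^sub>i = F(a\<^sub>i(\<phi>))\<close> and
  \<open>q(p, v) = (1 + v (2p - 1)) / 2\<close>, a polynomial in \<open>p\<close>. Its partial derivative in \<open>p\<^sub>j\<close> is
  \<open>\<Sum>\<^sub>x x\<^sub>j (\<Prod>\<^sub>i\<^sub>\<noteq>\<^sub>j q(p\<^sub>i, x\<^sub>i)) L(x)\<close>; pairing each \<open>x\<close> with its flip in coordinate \<open>j\<close>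
  turns this into the expectation of \<open>L(x[x\<^sub>j:=1]) - L(x[x\<^sub>j:=-1])\<close>, which by multilinearity
  is twice the partial derivative of \<open>L\<close> in \<open>x\<^sub>j\<close>. The chain rule through \<open>p\<^sub>j = F(a\<^sub>j(\<phi>))\<close>
  then yields exactly the straight-through estimator.
\<close>

definition sign_vectors :: "('n \<Rightarrow> real) set" where
  "sign_vectors = {x. \<forall>i. x i \<in> {-1, 1}}"

definition sign_weight :: "real \<Rightarrow> real \<Rightarrow> real" where
  "sign_weight p v = (1 + v * (2 * p - 1)) / 2"

text \<open>The expectation of \<open>f\<close> under independent signs with \<open>P(x\<^sub>i = 1) = p\<^sub>i\<close>, written as
  a polynomial in \<open>p\<close> so that it can be differentiated in \<open>p\<close> without constraints.\<close>
definition sign_expectation :: "('n::finite \<Rightarrow> real) \<Rightarrow> (('n \<Rightarrow> real) \<Rightarrow> 'b) \<Rightarrow> 'b::real_vector" where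
  "sign_expectation p f = (\<Sum>x\<in>sign_vectors. (\<Prod>i\<in>UNIV. sign_weight (p i) (x i)) *\<^sub>R f x)"

lemma finite_sign_vectors: "finite (sign_vectors :: ('n::finite \<Rightarrow> real) set)"
proof -
  have "sign_vectors = (PiE UNIV (\<lambda>_. {-1, 1}) :: ('n \<Rightarrow> real) set)"
    by (auto simp: sign_vectors_def PiE_def Pi_def extensional_def)
  then show ?thesis
    using finite_PiE[of "UNIV :: 'n set" "\<lambda>_. {-1, 1 :: real}"] by simp
qed

lemma is_cdf_bounds:
  assumes "is_cdf F"
  shows "0 \<le> F t" "F t \<le> 1"
proof -
  have F_mono: "mono F" and lim_bot: "(F \<longlongrightarrow> 0) at_bot" and lim_top: "(F \<longlongrightarrow> 1) at_top"
    using assms by (auto simp: is_cdf_def)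
  have "eventually (\<lambda>s. F s \<le> F t) at_bot" "eventually (\<lambda>s. F t \<le> F s) at_top"
    by (auto simp: eventually_at_bot_linorder eventually_at_top_linorder
        intro!: exI[of _ t] monoD[OF F_mono])
  then show "0 \<le> F t" "F t \<le> 1"
    by (auto intro: tendsto_le[OF _ tendsto_const lim_bot] tendsto_le[OF _ lim_top tendsto_const])
qed

lemma pmf_sign_pmf:
  assumes "0 \<le> p" "p \<le> 1" "v \<in> {-1, 1}"
  shows "pmf (sign_pmf p) v = sign_weight p v"
proof -
  have "inj (\<lambda>b::bool. if b then (1::real) else -1)"
    by (auto simp: inj_def)
  then have "pmf (sign_pmf p) (if b then 1 else -1) = pmf (bernoulli_pmf p) b" for b
    unfolding sign_pmf_def by (rule pmf_map_inj')
  from this[of True] this[of False] assms show ?thesis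
    by (auto simp: sign_weight_def)
qed

lemma expectation_Pi_sign_pmf:
  fixes f :: "('n::finite \<Rightarrow> real) \<Rightarrow> 'b::{banach, second_countable_topology}"
  assumes "\<And>i. 0 \<le> p i" "\<And>i. p i \<le> 1"
  shows "measure_pmf.expectation (Pi_pmf UNIV 0 (\<lambda>i. sign_pmf (p i))) f = sign_expectation p f"
proof -
  let ?X = "Pi_pmf UNIV 0 (\<lambda>i. sign_pmf (p i))"
  have "set_pmf (sign_pmf q) \<subseteq> {-1, 1}" for q
    unfolding sign_pmf_def by auto
  then have "set_pmf ?X \<subseteq> sign_vectors"
    by (auto simp: sign_vectors_def set_Pi_pmf PiE_dflt_def)
  then have "measure_pmf.expectation ?X f = (\<Sum>x\<in>sign_vectors. pmf ?X x *\<^sub>R f x)"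
    by (intro integral_measure_pmf[OF finite_sign_vectors]) auto
  also have "\<dots> = sign_expectation p f"
    unfolding sign_expectation_def
  proof (intro sum.cong refl arg_cong2[where f = scaleR])
    fix x :: "'n \<Rightarrow> real"
    assume "x \<in> sign_vectors"
    then have "(\<Prod>i\<in>UNIV. pmf (sign_pmf (p i)) (x i)) = (\<Prod>i\<in>UNIV. sign_weight (p i) (x i))"
      by (intro prod.cong refl pmf_sign_pmf assms) (auto simp: sign_vectors_def)
    moreover have "pmf ?X x = (\<Prod>i\<in>UNIV. pmf (sign_pmf (p i)) (x i))"
      by (rule pmf_Pi') auto
    ultimately show "pmf ?X x = (\<Prod>i\<in>UNIV. sign_weight (p i) (x i))"
      by simp
  qed
  finally show ?thesis .
qed

lemma sum_sign_vectors_flip: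
  fixes g :: "('n::finite \<Rightarrow> real) \<Rightarrow> 'b::comm_monoid_add"
  shows "(\<Sum>x\<in>sign_vectors. g x) = (\<Sum>x\<in>sign_vectors \<inter> {x. x j = 1}. g x + g (x(j := -1)))"
proof -
  let ?P = "sign_vectors \<inter> {x. x j = 1}" and ?N = "sign_vectors \<inter> {x. x j = -1}"
  have "sign_vectors = ?P \<union> ?N" "?P \<inter> ?N = {}"
    by (auto simp: sign_vectors_def)
  then have "(\<Sum>x\<in>sign_vectors. g x) = (\<Sum>x\<in>?P. g x) + (\<Sum>x\<in>?N. g x)"
    using finite_sign_vectors by (metis finite_Un sum.union_disjoint)
  also have "(\<Sum>x\<in>?N. g x) = (\<Sum>x\<in>?P. g (x(j := -1)))"
    by (rule sum.reindex_bij_witness[where i = "\<lambda>x. x(j := -1)" and j = "\<lambda>x. x(j := 1)"])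
       (auto simp: sign_vectors_def fun_upd_idem)
  finally show ?thesis
    by (simp add: sum.distrib)
qed

lemma multilinear_partial_eq:
  assumes "multilinear L"
  shows "2 * partial L j x = L (x(j := 1)) - L (x(j := -1))"
proof -
  obtain c b where line: "\<And>t. L (x(j := t)) = c * t + b"
    using assms unfolding multilinear_def by blast
  have "deriv (\<lambda>t. c * t + b) (x j) = c"
    by (rule DERIV_imp_deriv) (auto intro!: derivative_eq_intros)
  then have "partial L j x = c"
    unfolding partial_def line .
  with line show ?thesis
    by simp
qed

lemma sign_expectation_partial:
  fixes L :: "('n::finite \<Rightarrow> real) \<Rightarrow> real"
  assumes "multilinear L"
  shows "sign_expectation p (\<lambda>x. 2 * partial L j x)
       = (\<Sum>x\<in>sign_vectors. x j * (\<Prod>i\<in>UNIV - {j}. sign_weight (p i) (x i)) * L x)"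
proof -
  define R where "R x = (\<Prod>i\<in>UNIV - {j}. sign_weight (p i) (x i))" for x
  have R_upd: "R (x(j := v)) = R x" for x v
    unfolding R_def by (intro prod.cong) auto
  have weight_split: "(\<Prod>i\<in>UNIV. sign_weight (p i) (x i)) = sign_weight (p j) (x j) * R x" for x
    unfolding R_def by (simp add: prod.remove)
  have weights_sum: "sign_weight (p j) 1 + sign_weight (p j) (-1) = 1"
    by (simp add: sign_weight_def field_simps)
  have "sign_expectation p (\<lambda>x. 2 * partial L j x)
      = (\<Sum>x\<in>sign_vectors. sign_weight (p j) (x j) * R x * (L (x(j := 1)) - L (x(j := -1))))"
    unfolding sign_expectation_def multilinear_partial_eq[OF assms] weight_split by simp
  also have "\<dots> = (\<Sum>x\<in>sign_vectors \<inter> {x. x j = 1}. R x * (L x - L (x(j := -1))))"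
  proof (subst sum_sign_vectors_flip[of _ j], intro sum.cong refl)
    fix x
    assume "x \<in> sign_vectors \<inter> {x. x j = 1}"
    then have "x(j := 1) = x" "x j = 1"
      by auto
    moreover have "sign_weight (p j) 1 * c + sign_weight (p j) (-1) * c = c" for c
      using weights_sum by (metis distrib_right mult_1)
    ultimately show "sign_weight (p j) (x j) * R x * (L (x(j := 1)) - L (x(j := -1)))
        + sign_weight (p j) ((x(j := -1)) j) * R (x(j := -1))
          * (L ((x(j := -1))(j := 1)) - L ((x(j := -1))(j := -1)))
        = R x * (L x - L (x(j := -1)))"
      by (simp add: R_upd mult.assoc)
  qed
  also have "\<dots> = (\<Sum>x\<in>sign_vectors. x j * R x * L x)"
    by (subst sum_sign_vectors_flip[of _ j], intro sum.cong refl) (auto simp: R_upd algebra_simps)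
  finally show ?thesis
    unfolding R_def .
qed

lemma has_derivative_sign_expectation:
  fixes L :: "('n::finite \<Rightarrow> real) \<Rightarrow> real"
  assumes L: "multilinear L"
    and p: "\<And>i. ((\<lambda>\<psi>. p \<psi> i) has_derivative p' i) (at \<phi>)"
  shows "((\<lambda>\<psi>. sign_expectation (p \<psi>) L) has_derivative
           (\<lambda>h. \<Sum>j\<in>UNIV. p' j h * sign_expectation (p \<phi>) (\<lambda>x. 2 * partial L j x))) (at \<phi>)"
proof -
  have weight: "((\<lambda>\<psi>. sign_weight (p \<psi> i) v) has_derivative (\<lambda>h. v * p' i h)) (at \<phi>)" for i v
  proof -
    have "(\<lambda>\<psi>. sign_weight (p \<psi> i) v) = (\<lambda>\<psi>. (1 - v) / 2 + v * p \<psi> i)"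
      by (auto simp: sign_weight_def field_simps)
    then show ?thesis
      by (auto intro!: derivative_eq_intros p)
  qed
  have "((\<lambda>\<psi>. sign_expectation (p \<psi>) L) has_derivative
           (\<lambda>h. \<Sum>x\<in>sign_vectors. (\<Sum>j\<in>UNIV. x j * p' j h *
              (\<Prod>i\<in>UNIV - {j}. sign_weight (p \<phi> i) (x i))) *\<^sub>R L x)) (at \<phi>)"
    unfolding sign_expectation_def
    by (intro has_derivative_sum has_derivative_scaleR_left has_derivative_prod weight)
  moreover have "(\<Sum>x\<in>sign_vectors. (\<Sum>j\<in>UNIV. x j * p' j h *
              (\<Prod>i\<in>UNIV - {j}. sign_weight (p \<phi> i) (x i))) *\<^sub>R L x)
        = (\<Sum>j\<in>UNIV. p' j h * sign_expectation (p \<phi>) (\<lambda>x. 2 * partial L j x))" for h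
    unfolding sign_expectation_partial[OF L] real_scaleR_def sum_distrib_right sum_distrib_left
    by (subst sum.swap) (simp add: mult_ac)
  ultimately show ?thesis
    by simp
qed

theorem propositionB2:
  fixes a :: "real ^ 'd \<Rightarrow> 'n::finite \<Rightarrow> real"
    and ga :: "real ^ 'd \<Rightarrow> 'n \<Rightarrow> real ^ 'd"
    and F :: "real \<Rightarrow> real"
    and L :: "('n \<Rightarrow> real) \<Rightarrow> real"
    and \<phi> :: "real ^ 'd"
  assumes a_grad: "\<And>\<psi> i. GDERIV (\<lambda>\<theta>. a \<theta> i) \<psi> :> ga \<psi> i"
    and F_cdf: "is_cdf F"
    and F_diff: "\<And>t. F differentiable (at t)"
    and L_ml: "multilinear L"
  shows "GDERIV (\<lambda>\<psi>. measure_pmf.expectation (ste_dist F a \<psi>) L) \<phi> :>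
           measure_pmf.expectation (ste_dist F a \<phi>) (ste F a ga L \<phi>)"
proof -
  let ?p = "\<lambda>\<psi> i. F (a \<psi> i)" and ?F' = "\<lambda>i. deriv F (a \<phi> i)"
  have expectation: "measure_pmf.expectation (ste_dist F a \<psi>) f = sign_expectation (?p \<psi>) f"
    for \<psi> and f :: "('n \<Rightarrow> real) \<Rightarrow> 'b::{banach, second_countable_topology}"
    unfolding ste_dist_def by (rule expectation_Pi_sign_pmf) (simp_all add: is_cdf_bounds[OF F_cdf])
  have "GDERIV (\<lambda>\<psi>. ?p \<psi> i) \<phi> :> ?F' i *\<^sub>R ga \<phi> i" for i
    using GDERIV_DERIV_compose[OF a_grad] F_diff by (simp add: DERIV_deriv_iff_real_differentiable)
  then have "((\<lambda>\<psi>. ?p \<psi> i) has_derivative (\<lambda>h. ?F' i * (h \<bullet> ga \<phi> i))) (at \<phi>)" for i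
    by (simp add: gderiv_def)
  from has_derivative_sign_expectation[OF L_ml this]
  show ?thesis
    unfolding gderiv_def expectation
  proof (rule has_derivative_eq_rhs)
    show "(\<lambda>h. \<Sum>j\<in>UNIV. ?F' j * (h \<bullet> ga \<phi> j) * sign_expectation (?p \<phi>) (\<lambda>x. 2 * partial L j x))
        = (\<lambda>h. h \<bullet> sign_expectation (?p \<phi>) (ste F a ga L \<phi>))"
      unfolding ste_def sign_expectation_def inner_sum_right inner_scaleR_right sum_distrib_left
      by (subst sum.swap) (simp add: mult_ac)
  qed
qed

end
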